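(* Let $\mathsf{Prop}$ be a non-empty set of propositions and $\mathsf{L}$ any fragment of $\mathsf{LTL}(\mathsf{Prop})$. Let $\mathcal{S}=(\mathcal{P},\mathcal{N})$ be a sample of words in $\mathcal{W}(\mathsf{Prop})$, each $w\in\mathcal{P}\cup\mathcal{N}$ given as $w=u_w\cdot v_w^\omega$ with $u_w,v_w\in(2^{\mathsf{Prop}})^*$, $u_wv_w\neq\varepsilon$. If there is an $\mathcal{S}$-separating $\mathsf{L}$-formula, then there is one of size at most $2^n$, where $n:=\sum_{w\in\mathcal{P}\cup\mathcal{N}}(|u_w|+|v_w|)$.
   Context: $\mathsf{LTL}(\mathsf{Prop})$-formulas: $\varphi::=p\mid\neg\varphi\mid\varphi\vee\varphi\mid\varphi\wedge\varphi\mid\mathbf{X}\varphi\mid\mathbf{F}\varphi\mid\mathbf{G}\varphi\mid\varphi\,\mathbf{U}\,\varphi$, $p\in\mathsf{Prop}$. A fragment is given by a subset of these operators; its formulas are those using only them. $\mathsf{sz}(\varphi)$ is the number of distinct subformulas. $\mathcal{W}(\mathsf{Prop})=\{u\cdot v^\omega: u,v\in(2^{\mathsf{Prop}})^*,\ u\cdot v\ne\varepsilon\}$, where for $v=\varepsilon$ this denotes the finite word $u$. For a word $w$, $|w|\in\mathbb{N}\cup\{\infty\}$ is its length, $w[j]$ its $j$-th letter and $w[j:]$ its suffix from position $j$. Semantics: $w\models p$ iff $p\in w[0]$; Boolean connectives as usual; $w\models\mathbf{X}\varphi$ iff $|w|\ge2$ and $w[1:]\models\varphi$; $w\models\mathbf{F}\varphi$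 iff $\exists j<|w|$, $w[j:]\models\varphi$; $w\models\mathbf{G}\varphi$ iff $\forall j<|w|$, $w[j:]\models\varphi$; $w\models\varphi_1\mathbf{U}\varphi_2$ iff $\exists j<|w|$ with $w[j:]\models\varphi_2$ and $w[k:]\models\varphi_1$ for all $k<j$. A sample is a pair of finite sets of words; a formula is $\mathcal{S}$-separating if satisfied by every word in $\mathcal{P}$ and by none in $\mathcal{N}$. *)

theory Defs
  imports Main "HOL-Library.Extended_Nat"
begin

datatype 'p ltl =
    Atom 'p
  | Neg "'p ltl"
  | Disj "'p ltl" "'p ltl"
  | Conj "'p ltl" "'p ltl"
  | Next "'p ltl"
  | Fin "'p ltl"
  | Glob "'p ltl"
  | Until "'p ltl" "'p ltl"

datatype ltl_op = OpNeg | OpOr | OpAnd | OpX | OpF | OpG | OpU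

fun ops :: "'p ltl \<Rightarrow> ltl_op set" where
  "ops (Atom p) = {}"
| "ops (Neg a) = insert OpNeg (ops a)"
| "ops (Disj a b) = insert OpOr (ops a \<union> ops b)"
| "ops (Conj a b) = insert OpAnd (ops a \<union> ops b)"
| "ops (Next a) = insert OpX (ops a)"
| "ops (Fin a) = insert OpF (ops a)"
| "ops (Glob a) = insert OpG (ops a)"
| "ops (Until a b) = insert OpU (ops a \<union> ops b)"

fun atoms :: "'p ltl \<Rightarrow> 'p set" where
  "atoms (Atom p) = {p}"
| "atoms (Neg a) = atoms a"
| "atoms (Disj a b) = atoms a \<union> atoms b"
| "atoms (Conj a b) = atoms a \<union> atoms b"
| "atoms (Next a) = atoms a"
| "atoms (Fin a) = atoms a"
| "atoms (Glob a) = atoms a"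
| "atoms (Until a b) = atoms a \<union> atoms b"

definition in_fragment :: "'p set \<Rightarrow> ltl_op set \<Rightarrow> 'p ltl \<Rightarrow> bool" where
  "in_fragment Prop L \<phi> \<longleftrightarrow> atoms \<phi> \<subseteq> Prop \<and> ops \<phi> \<subseteq> L"

fun subformulas :: "'p ltl \<Rightarrow> 'p ltl set" where
  "subformulas (Atom p) = {Atom p}"
| "subformulas (Neg a) = insert (Neg a) (subformulas a)"
| "subformulas (Disj a b) = insert (Disj a b) (subformulas a \<union> subformulas b)"
| "subformulas (Conj a b) = insert (Conj a b) (subformulas a \<union> subformulas b)"
| "subformulas (Next a) = insert (Next a) (subformulas a)"
| "subformulas (Fin a) = insert (Fin a) (subformulas a)"
| "subformulas (Glob a) = insert (Glob a) (subformulas a)"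
| "subformulas (Until a b) = insert (Until a b) (subformulas a \<union> subformulas b)"

definition sz :: "'p ltl \<Rightarrow> nat" where
  "sz \<phi> = card (subformulas \<phi>)"

text \<open>The word u \<cdot> v^\<omega> (the finite word u if v = []), represented by the pair (u, v).\<close>
definition wlen :: "'p set list \<Rightarrow> 'p set list \<Rightarrow> enat" where
  "wlen u v = (if v = [] then enat (length u) else \<infinity>)"

definition wletter :: "'p set list \<Rightarrow> 'p set list \<Rightarrow> nat \<Rightarrow> 'p set" where
  "wletter u v j = (if j < length u then u ! j else v ! ((j - length u) mod length v))"

fun sat :: "'p set list \<Rightarrow> 'p set list \<Rightarrow> nat \<Rightarrow> 'p ltl \<Rightarrow> bool" where
  "sat u v i (Atom p) = (p \<in> wletter u v i)"
| "sat u v i (Neg a) = (\<not> sat u v i a)"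
| "sat u v i (Disj a b) = (sat u v i a \<or> sat u v i b)"
| "sat u v i (Conj a b) = (sat u v i a \<and> sat u v i b)"
| "sat u v i (Next a) = (enat (i + 1) < wlen u v \<and> sat u v (i + 1) a)"
| "sat u v i (Fin a) = (\<exists>j. i \<le> j \<and> enat j < wlen u v \<and> sat u v j a)"
| "sat u v i (Glob a) = (\<forall>j. i \<le> j \<and> enat j < wlen u v \<longrightarrow> sat u v j a)"
| "sat u v i (Until a b) = (\<exists>j. i \<le> j \<and> enat j < wlen u v \<and> sat u v j b \<and>
                              (\<forall>k. i \<le> k \<and> k < j \<longrightarrow> sat u v k a))"

definition models :: "'p set list \<times> 'p set list \<Rightarrow> 'p ltl \<Rightarrow> bool" where
  "models w \<phi> = sat (fst w) (snd w) 0 \<phi>"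

definition is_word :: "'p set \<Rightarrow> 'p set list \<times> 'p set list \<Rightarrow> bool" where
  "is_word Prop w \<longleftrightarrow> fst w @ snd w \<noteq> [] \<and> set (fst w @ snd w) \<subseteq> Pow Prop"

definition separating ::
  "('p set list \<times> 'p set list) set \<Rightarrow> ('p set list \<times> 'p set list) set \<Rightarrow> 'p ltl \<Rightarrow> bool" where
  "separating P N \<phi> \<longleftrightarrow> (\<forall>w\<in>P. models w \<phi>) \<and> (\<forall>w\<in>N. \<not> models w \<phi>)"

end

theory Submission
  imports Defs
begin

text \<open>
  Take a separating formula of the fragment with the fewest distinct subformulas. On a word
  \<open>u \<cdot> v\<^sup>\<omega>\<close> the truth of a formula at a position depends only on the suffix starting there,
  and every suffix equals one starting among the first \<open>|u| + |v|\<close> positions. So if two distinct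
  subformulas \<open>a\<close>, \<open>b\<close> (with \<open>a\<close> not a subformula of \<open>b\<close>) were true at exactly the same of the
  \<open>n\<close> sample positions, they would be equivalent on all words of the sample, and replacing \<open>a\<close>
  by \<open>b\<close> would give a separating formula of the fragment with fewer subformulas. Hence distinct
  subformulas have distinct sets of true sample positions, and there are at most \<open>2\<^sup>n\<close> of them.
\<close>

lemma subformula_self: "\<phi> \<in> subformulas \<phi>"
  by (cases \<phi>) auto

lemma finite_subformulas: "finite (subformulas \<phi>)"
  by (induction \<phi>) auto

lemma subformulas_subset: "\<psi> \<in> subformulas \<phi> \<Longrightarrow> subformulas \<psi> \<subseteq> subformulas \<phi>"
  by (induction \<phi>) auto

lemma size_subformula: "\<psi> \<in> subformulas \<phi> \<Longrightarrow> \<psi> = \<phi> \<or> size \<psi> < size \<phi>"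
  by (induction \<phi>) auto

lemma in_fragment_subformula:
  "\<psi> \<in> subformulas \<phi> \<Longrightarrow> in_fragment Prop L \<phi> \<Longrightarrow> in_fragment Prop L \<psi>"
  unfolding in_fragment_def by (induction \<phi>) auto

primrec replace_subformula :: "'p ltl \<Rightarrow> 'p ltl \<Rightarrow> 'p ltl \<Rightarrow> 'p ltl" where
  "replace_subformula a b (Atom p) = (if Atom p = a then b else Atom p)"
| "replace_subformula a b (Neg x) =
    (if Neg x = a then b else Neg (replace_subformula a b x))"
| "replace_subformula a b (Disj x y) =
    (if Disj x y = a then b else Disj (replace_subformula a b x) (replace_subformula a b y))"
| "replace_subformula a b (Conj x y) =
    (if Conj x y = a then b else Conj (replace_subformula a b x) (replace_subformula a b y))"
| "replace_subformula a b (Next x) =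
    (if Next x = a then b else Next (replace_subformula a b x))"
| "replace_subformula a b (Fin x) =
    (if Fin x = a then b else Fin (replace_subformula a b x))"
| "replace_subformula a b (Glob x) =
    (if Glob x = a then b else Glob (replace_subformula a b x))"
| "replace_subformula a b (Until x y) =
    (if Until x y = a then b else Until (replace_subformula a b x) (replace_subformula a b y))"

lemma replace_subformula_self [simp]: "replace_subformula a b a = b"
  by (cases a) auto

lemma replace_subformula_nonoccurring: "a \<notin> subformulas \<phi> \<Longrightarrow> replace_subformula a b \<phi> = \<phi>"
  by (induction \<phi>) (auto simp: subformula_self)

lemma subformulas_replace_subformula:
  "subformulas (replace_subformula a b \<phi>) \<subseteq> replace_subformula a b ` subformulas \<phi> \<union> subformulas b"
  by (induction \<phi>) auto

lemma in_fragment_replace_subformula: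
  "in_fragment Prop L \<phi> \<Longrightarrow> in_fragment Prop L b \<Longrightarrow> in_fragment Prop L (replace_subformula a b \<phi>)"
  unfolding in_fragment_def by (induction \<phi>) auto

lemma sz_replace_subformula_less:
  assumes a: "a \<in> subformulas \<phi>" and b: "b \<in> subformulas \<phi>" and a_notin_b: "a \<notin> subformulas b"
  shows "sz (replace_subformula a b \<phi>) < sz \<phi>"
proof -
  let ?r = "replace_subformula a b"
  have "?r c = c" if "c \<in> subformulas b" for c
    using that a_notin_b subformulas_subset replace_subformula_nonoccurring by blast
  then have "subformulas b = ?r ` subformulas b"
    by simp
  also have "\<dots> \<subseteq> ?r ` subformulas \<phi>"
    using subformulas_subset[OF b] by blast
  finally have "subformulas (?r \<phi>) \<subseteq> ?r ` subformulas \<phi>"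
    using subformulas_replace_subformula[of a b \<phi>] by blast
  also have "?r ` subformulas \<phi> = ?r ` (subformulas \<phi> - {a})"
  proof -
    have "b \<in> subformulas \<phi> - {a}"
      using b a_notin_b subformula_self by blast
    moreover have "?r b = ?r a"
      using a_notin_b replace_subformula_nonoccurring by simp
    ultimately have "?r a \<in> ?r ` (subformulas \<phi> - {a})"
      by (metis imageI)
    then show ?thesis
      using a by (metis image_insert insert_Diff insert_absorb)
  qed
  finally have "sz (?r \<phi>) \<le> card (subformulas \<phi> - {a})"
    unfolding sz_def
    by (meson card_image_le card_mono finite_Diff finite_imageI finite_subformulas order_trans)
  also have "\<dots> < sz \<phi>"
    unfolding sz_def using a finite_subformulas by (metis card_Diff1_less)
  finally show ?thesis .
qed

lemma sat_replace_subformula: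
  assumes equiv: "\<forall>i. enat i < wlen u v \<longrightarrow> sat u v i a = sat u v i b"
    and i: "enat i < wlen u v"
  shows "sat u v i (replace_subformula a b \<phi>) = sat u v i \<phi>"
  using i
proof (induction \<phi> arbitrary: i)
  case (Until x y)
  show ?case
  proof (cases "Until x y = a")
    case False
    have "sat u v k (replace_subformula a b x) = sat u v k x"
      if "k < j" "enat j < wlen u v" for k j
      using Until.IH(1) that by (meson enat_ord_simps(2) order.strict_trans)
    then show ?thesis
      using False Until.IH(2) by (auto 0 4)
  qed (use equiv Until.prems in auto)
qed (use equiv in auto)

lemma ex_ge_iff_ex_add: "(\<exists>j\<ge>i. P j) \<longleftrightarrow> (\<exists>d. P (i + d :: nat))"
  by (metis le_add1 le_add_diff_inverse)

lemma all_ge_iff_all_add: "(\<forall>j\<ge>i. P j) \<longleftrightarrow> (\<forall>d. P (i + d :: nat))"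
  by (metis le_add1 le_add_diff_inverse)

lemma until_iff_until_add:
  "(\<exists>j\<ge>i. Q j \<and> (\<forall>k. i \<le> k \<and> k < j \<longrightarrow> P k)) \<longleftrightarrow> (\<exists>d. Q (i + d :: nat) \<and> (\<forall>e<d. P (i + e)))"
proof
  assume "\<exists>j\<ge>i. Q j \<and> (\<forall>k. i \<le> k \<and> k < j \<longrightarrow> P k)"
  then obtain j where "i \<le> j" "Q j" "\<forall>k. i \<le> k \<and> k < j \<longrightarrow> P k" by blast
  then show "\<exists>d. Q (i + d) \<and> (\<forall>e<d. P (i + e))"
    by (intro exI[of _ "j - i"]) auto
next
  assume "\<exists>d. Q (i + d) \<and> (\<forall>e<d. P (i + e))"
  then obtain d where "Q (i + d)" "\<forall>e<d. P (i + e)" by blast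
  then show "\<exists>j\<ge>i. Q j \<and> (\<forall>k. i \<le> k \<and> k < j \<longrightarrow> P k)"
    by (intro exI[of _ "i + d"]) (auto dest!: le_Suc_ex)
qed

lemma sat_suffix_cong:
  assumes "v \<noteq> []" and "v' \<noteq> []"
    and "\<forall>k. wletter u v (i + k) = wletter u' v' (i' + k)"
  shows "sat u v i \<phi> = sat u' v' i' \<phi>"
  using assms(3)
proof (induction \<phi> arbitrary: i i')
  case (Atom p)
  then show ?case by (metis add_0_right sat.simps(1))
next
  case (Next x)
  have "sat u v (i + 1) x = sat u' v' (i' + 1) x"
    by (rule Next.IH) (use Next.prems in \<open>metis add.assoc\<close>)
  then show ?case using assms by (simp add: wlen_def)
next
  case (Fin x)
  have "sat u v (i + d) x = sat u' v' (i' + d) x" for d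
    by (rule Fin.IH) (use Fin.prems in \<open>metis add.assoc\<close>)
  then show ?case using assms by (simp add: wlen_def ex_ge_iff_ex_add)
next
  case (Glob x)
  have "sat u v (i + d) x = sat u' v' (i' + d) x" for d
    by (rule Glob.IH) (use Glob.prems in \<open>metis add.assoc\<close>)
  then show ?case using assms by (simp add: wlen_def all_ge_iff_all_add)
next
  case (Until x y)
  have "sat u v (i + d) x = sat u' v' (i' + d) x" "sat u v (i + d) y = sat u' v' (i' + d) y" for d
    by (rule Until.IH; use Until.prems in \<open>metis add.assoc\<close>)+
  then show ?case using assms by (simp add: wlen_def until_iff_until_add)
qed auto

lemma wletter_periodic:
  assumes "length u \<le> i"
  shows "wletter u v (i + k) = wletter u v (length u + (i - length u) mod length v + k)"
proof -
  have "(i + k - length u) mod length v = ((i - length u) mod length v + k) mod length v"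
    using assms by (simp add: mod_add_left_eq)
  then show ?thesis
    using assms by (simp add: wletter_def)
qed

lemma sat_eq_if_eq_below_period:
  assumes below: "\<forall>i < length u + length v. sat u v i a = sat u v i b"
    and i: "enat i < wlen u v"
  shows "sat u v i a = sat u v i b"
proof (cases "v = [] \<or> i < length u + length v")
  case True
  then show ?thesis using i below by (auto simp: wlen_def)
next
  case False
  let ?i' = "length u + (i - length u) mod length v"
  have "sat u v i \<phi> = sat u v ?i' \<phi>" for \<phi>
    using False by (intro sat_suffix_cong allI wletter_periodic) auto
  moreover have "?i' < length u + length v"
    using False by simp
  ultimately show ?thesis
    using below by presburger
qed

definition sample_positions ::
  "('p set list \<times> 'p set list) set \<Rightarrow> (('p set list \<times> 'p set list) \<times> nat) set" where
  "sample_positions W = Sigma W (\<lambda>w. {..< length (fst w) + length (snd w)})"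

definition truth_set ::
  "('p set list \<times> 'p set list) set \<Rightarrow> 'p ltl \<Rightarrow> (('p set list \<times> 'p set list) \<times> nat) set" where
  "truth_set W \<phi> = {(w, i) \<in> sample_positions W. sat (fst w) (snd w) i \<phi>}"

lemma card_sample_positions:
  "finite W \<Longrightarrow> card (sample_positions W) = (\<Sum>w \<in> W. length (fst w) + length (snd w))"
  unfolding sample_positions_def by (subst card_SigmaI) auto

lemma sat_eq_if_truth_set_eq:
  assumes "truth_set W a = truth_set W b" and "w \<in> W" and "enat i < wlen (fst w) (snd w)"
  shows "sat (fst w) (snd w) i a = sat (fst w) (snd w) i b"
proof (rule sat_eq_if_eq_below_period[OF _ assms(3)], intro allI impI)
  fix j assume "j < length (fst w) + length (snd w)"
  then have "(w, j) \<in> sample_positions W" using assms(2) by (simp add: sample_positions_def)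
  then show "sat (fst w) (snd w) j a = sat (fst w) (snd w) j b"
    using assms(1) unfolding truth_set_def by (metis (no_types, lifting) case_prod_conv mem_Collect_eq)
qed

lemma inj_on_truth_set_if_sz_minimal:
  assumes words: "\<forall>w \<in> P \<union> N. fst w @ snd w \<noteq> []"
    and \<phi>: "in_fragment Prop L \<phi>" "separating P N \<phi>"
    and minimal: "\<And>\<psi>. in_fragment Prop L \<psi> \<Longrightarrow> separating P N \<psi> \<Longrightarrow> sz \<phi> \<le> sz \<psi>"
  shows "inj_on (truth_set (P \<union> N)) (subformulas \<phi>)"
proof (rule inj_onI, rule ccontr)
  fix a' b' assume a'b': "a' \<in> subformulas \<phi>" "b' \<in> subformulas \<phi>"
    "truth_set (P \<union> N) a' = truth_set (P \<union> N) b'" "a' \<noteq> b'"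
  have "a' \<notin> subformulas b' \<or> b' \<notin> subformulas a'"
    using size_subformula a'b'(4) by (metis less_asym)
  then obtain a b where ab: "a \<in> subformulas \<phi>" "b \<in> subformulas \<phi>"
    "truth_set (P \<union> N) a = truth_set (P \<union> N) b" "a \<notin> subformulas b"
    using a'b'(1-3) by metis
  let ?\<phi>' = "replace_subformula a b \<phi>"
  have "models w ?\<phi>' = models w \<phi>" if w: "w \<in> P \<union> N" for w
  proof -
    have "enat 0 < wlen (fst w) (snd w)"
      using words w by (auto simp: wlen_def)
    moreover have "\<forall>i. enat i < wlen (fst w) (snd w) \<longrightarrow>
        sat (fst w) (snd w) i a = sat (fst w) (snd w) i b"
      using sat_eq_if_truth_set_eq[OF ab(3) w] by blast
    ultimately show ?thesis
      unfolding models_def by (intro sat_replace_subformula)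
  qed
  then have "separating P N ?\<phi>'"
    using \<phi>(2) unfolding separating_def by auto
  moreover have "in_fragment Prop L ?\<phi>'"
    using \<phi>(1) in_fragment_subformula[OF ab(2) \<phi>(1)] by (rule in_fragment_replace_subformula)
  ultimately have "sz \<phi> \<le> sz ?\<phi>'"
    by (rule minimal[rotated])
  then show False
    using sz_replace_subformula_less[OF ab(1,2,4)] by simp
qed

theorem corollary2:
  fixes Prop :: "'p set" and L :: "ltl_op set"
    and P N :: "('p set list \<times> 'p set list) set"
  assumes "Prop \<noteq> {}"
    and "finite P" and "finite N"
    and "\<forall>w \<in> P \<union> N. is_word Prop w"
    and "\<exists>\<phi>. in_fragment Prop L \<phi> \<and> separating P N \<phi>"
  shows "\<exists>\<phi>. in_fragment Prop L \<phi> \<and> separating P N \<phi> \<and>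
           sz \<phi> \<le> 2 ^ (\<Sum>w \<in> P \<union> N. length (fst w) + length (snd w))"
proof -
  let ?sep = "\<lambda>\<phi>. in_fragment Prop L \<phi> \<and> separating P N \<phi>"
  obtain \<phi> where \<phi>: "?sep \<phi>" and minimal: "\<And>\<psi>. ?sep \<psi> \<Longrightarrow> sz \<phi> \<le> sz \<psi>"
    using assms(5) ex_has_least_nat[of ?sep _ sz] by blast
  have fin: "finite (sample_positions (P \<union> N))"
    using assms(2,3) by (simp add: sample_positions_def)
  have "inj_on (truth_set (P \<union> N)) (subformulas \<phi>)"
    using assms(4) \<phi> minimal by (intro inj_on_truth_set_if_sz_minimal) (auto simp: is_word_def)
  then have "sz \<phi> \<le> card (Pow (sample_positions (P \<union> N)))"
    unfolding sz_def by (rule card_inj_on_le) (auto simp: truth_set_def fin)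
  then show ?thesis
    using \<phi> fin assms(2,3) by (auto simp: card_Pow card_sample_positions)
qed

end
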